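(* In the concurrent tree algorithm described in the context, for every operation $Op$ and every tree node $v$ on $Op$'s traversal path, the procedure $\mathrm{execute\_until\_timestamp}(Op,v)$ (executing in $v$ all operations in $v$'s queue up to and including $Op$) finishes in a finite number of steps.
   Context: Setting: an asynchronous shared-memory system with a finite set $P$ of processes operating on a concurrent binary search tree with a fictive root whose only child is the real root. Every node $v$ has a unique id, a FIFO queue of operation descriptors, and a pointer to an immutable state record containing $\mathrm{Ts\_Mod}$ (the timestamp of the last modifying operation). Each operation $Op$ has a descriptor with a timestamp, a queue $Op.\mathrm{Traverse}$ of nodes, and a map $Op.\mathrm{Processed}$. Execution of $Op$ proceeds as follows. Insert the descriptor into the root queue, which assigns strictly increasing timestamps in insertion order. Set $Op.\mathrm{Traverse}$ to contain the root. While it is nonempty, take its head $v$, run $\mathrm{execute\_until\_timestamp}(Op,v)$, and pop $v$. $\mathrm{execute\_until\_timestamp}(Op,v)$ repeatedly reads the head descriptor $D$ of $v$'s queue and returns if the queue is empty or if $D.\mathrm{Timestamp}>Op.\mathrm{Timestamp}$. Otherwise it executes $D$ in $v$. Executing $D$ in $v$ consists of the following steps. - Compute the children $C$ of $v$ where $D$ continues. - For each $c\in C$: - push $c$ onto $D.\mathrm{Traverse}$; - if $c$'s $\mathrm{Ts\_Mod}<D.\mathrm{Timestamp}$, make one CAS attempt installing a new state reflecting $D$ with $\mathrm{Ts\_Mod}=D.\mathrm{Timestamp}$; - append $D$ to $c$'s queue unless already appended. - Record ($v$'s id, partial result) in $D.\mathrm{Processed}$ if absent. - Remove $D$ from the head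 of $v$'s queue if still there. No step is retried on failure. *)

theory Defs
  imports Main
begin

text \<open>
Descriptor ids are natural numbers; a descriptor's id coincides with the timestamp
it receives when it is (atomically) inserted into the fictive root's queue.
The concrete BST logic is left abstract:
  cont a s : the children (a finite list) in which an operation of kind a continues
             at a node whose state content is s;
  res a s  : the partial result recorded for a at such a node;
  upd a s  : the new state content of a child after reflecting operation a.
Every shared-memory access is one atomic step of the executing process.
\<close>

record ('n,'a,'r) desc =
  d_op :: 'a
  d_ts :: nat
  d_trav :: "'n list"      \<comment> \<open>all nodes ever pushed onto the Traverse queue\<close>
  d_head :: nat            \<comment> \<open>Traverse queue = drop d_head d_trav\<close>
  d_proc :: "'n \<Rightarrow> 'r option"

record ('n,'s,'a,'r) mem =
  m_queue :: "'n \<Rightarrow> nat list"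
  m_appd  :: "'n \<Rightarrow> nat set"            \<comment> \<open>descriptors ever appended to the queue\<close>
  m_nst   :: "'n \<Rightarrow> 's \<times> nat"          \<comment> \<open>state record: content and Ts_Mod\<close>
  m_descs :: "nat \<Rightarrow> ('n,'a,'r) desc option"
  m_clock :: nat                           \<comment> \<open>next timestamp\<close>

datatype ('n,'s,'r) pc =
    Idle
  | Trav nat
  | EutRead nat 'n
  | ExecCompute nat 'n nat
  | ExecChildren nat 'n nat "'n list" 'r
  | ExecReadC nat 'n nat 'n "'n list" 'r
  | ExecCAS nat 'n nat 'n "'n list" 'r "'s \<times> nat"
  | ExecAppend nat 'n nat 'n "'n list" 'r
  | ExecRemove nat 'n nat
  | PopTrav nat 'n

definition dsc :: "('n,'s,'a,'r) mem \<Rightarrow> nat \<Rightarrow> ('n,'a,'r) desc" where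
  "dsc m D = the (m_descs m D)"

definition upd_dsc :: "('n,'s,'a,'r) mem \<Rightarrow> nat \<Rightarrow> (('n,'a,'r) desc \<Rightarrow> ('n,'a,'r) desc)
    \<Rightarrow> ('n,'s,'a,'r) mem" where
  "upd_dsc m D f = m\<lparr>m_descs := (m_descs m)(D := map_option f (m_descs m D))\<rparr>"

text \<open>One atomic step of a process with program counter given; the argument a is the
(nondeterministically chosen) kind of the next operation, used only in state Idle.
Op = d is the operation whose traversal is executed, D the descriptor being executed.\<close>

fun pstep :: "('a \<Rightarrow> 's \<Rightarrow> 'n list) \<Rightarrow> ('a \<Rightarrow> 's \<Rightarrow> 'r) \<Rightarrow> ('a \<Rightarrow> 's \<Rightarrow> 's) \<Rightarrow> 'n \<Rightarrow> 'a
    \<Rightarrow> ('n,'s,'r) pc \<Rightarrow> ('n,'s,'a,'r) mem \<Rightarrow> ('n,'s,'r) pc \<times> ('n,'s,'a,'r) mem" where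
  "pstep cont res upd root a Idle m =
     (let d = m_clock m;
          D = \<lparr>d_op = a, d_ts = d, d_trav = [root], d_head = 0, d_proc = Map.empty\<rparr>
      in (Trav d, m\<lparr>m_descs := (m_descs m)(d \<mapsto> D),
                    m_queue := (m_queue m)(root := m_queue m root @ [d]),
                    m_appd := (m_appd m)(root := insert d (m_appd m root)),
                    m_clock := Suc d\<rparr>))"
| "pstep cont res upd root a (Trav d) m =
     (let Dd = dsc m d in
      if d_head Dd < length (d_trav Dd) then (EutRead d (d_trav Dd ! d_head Dd), m)
      else (Idle, m))"
| "pstep cont res upd root a (EutRead d v) m =
     (case m_queue m v of
        [] \<Rightarrow> (PopTrav d v, m)
      | D # _ \<Rightarrow> (if d_ts (dsc m D) > d_ts (dsc m d) then (PopTrav d v, m)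
                 else (ExecCompute d v D, m)))"
| "pstep cont res upd root a (ExecCompute d v D) m =
     (let s = fst (m_nst m v); b = d_op (dsc m D)
      in (ExecChildren d v D (cont b s) (res b s), m))"
| "pstep cont res upd root a (ExecChildren d v D (c # cs) r) m =
     (ExecReadC d v D c cs r,
      if c \<in> set (d_trav (dsc m D)) then m
      else upd_dsc m D (\<lambda>x. x\<lparr>d_trav := d_trav x @ [c]\<rparr>))"
| "pstep cont res upd root a (ExecChildren d v D [] r) m =
     (ExecRemove d v D,
      if d_proc (dsc m D) v = None then upd_dsc m D (\<lambda>x. x\<lparr>d_proc := (d_proc x)(v \<mapsto> r)\<rparr>)
      else m)"
| "pstep cont res upd root a (ExecReadC d v D c cs r) m =
     (if snd (m_nst m c) < d_ts (dsc m D) then (ExecCAS d v D c cs r (m_nst m c), m)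
      else (ExecAppend d v D c cs r, m))"
| "pstep cont res upd root a (ExecCAS d v D c cs r old) m =
     (ExecAppend d v D c cs r,
      if m_nst m c = old
      then m\<lparr>m_nst := (m_nst m)(c := (upd (d_op (dsc m D)) (fst old), d_ts (dsc m D)))\<rparr>
      else m)"
| "pstep cont res upd root a (ExecAppend d v D c cs r) m =
     (ExecChildren d v D cs r,
      if D \<in> m_appd m c then m
      else m\<lparr>m_queue := (m_queue m)(c := m_queue m c @ [D]),
             m_appd := (m_appd m)(c := insert D (m_appd m c))\<rparr>)"
| "pstep cont res upd root a (ExecRemove d v D) m =
     (EutRead d v,
      case m_queue m v of
        [] \<Rightarrow> m
      | D' # q \<Rightarrow> (if D' = D then m\<lparr>m_queue := (m_queue m)(v := q)\<rparr> else m))"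
| "pstep cont res upd root a (PopTrav d v) m =
     (Trav d, upd_dsc m d (\<lambda>x. x\<lparr>d_head := Suc (d_head x)\<rparr>))"

type_synonym ('p,'n,'s,'a,'r) config = "('n,'s,'a,'r) mem \<times> ('p \<Rightarrow> ('n,'s,'r) pc)"

definition step :: "('a \<Rightarrow> 's \<Rightarrow> 'n list) \<Rightarrow> ('a \<Rightarrow> 's \<Rightarrow> 'r) \<Rightarrow> ('a \<Rightarrow> 's \<Rightarrow> 's) \<Rightarrow> 'n
    \<Rightarrow> 'p \<Rightarrow> ('p,'n,'s,'a,'r) config \<Rightarrow> ('p,'n,'s,'a,'r) config \<Rightarrow> bool" where
  "step cont res upd root p cf cf' \<longleftrightarrow>
     (\<exists>a. cf' = (let (q, m') = pstep cont res upd root a (snd cf p) (fst cf)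
                  in (m', (snd cf)(p := q))))"

definition init_conf :: "('n \<Rightarrow> 's) \<Rightarrow> ('p,'n,'s,'a,'r) config" where
  "init_conf s0 = (\<lparr>m_queue = (\<lambda>_. []), m_appd = (\<lambda>_. {}), m_nst = (\<lambda>v. (s0 v, 0)),
                     m_descs = (\<lambda>_. None), m_clock = 1\<rparr>, (\<lambda>_. Idle))"

definition execution :: "('a \<Rightarrow> 's \<Rightarrow> 'n list) \<Rightarrow> ('a \<Rightarrow> 's \<Rightarrow> 'r) \<Rightarrow> ('a \<Rightarrow> 's \<Rightarrow> 's) \<Rightarrow> 'n
    \<Rightarrow> ('n \<Rightarrow> 's) \<Rightarrow> (nat \<Rightarrow> ('p,'n,'s,'a,'r) config) \<Rightarrow> (nat \<Rightarrow> 'p) \<Rightarrow> bool" where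
  "execution cont res upd root s0 \<sigma> sched \<longleftrightarrow>
     \<sigma> 0 = init_conf s0 \<and> (\<forall>i. step cont res upd root (sched i) (\<sigma> i) (\<sigma> (Suc i)))"

end

theory Submission
  imports Defs "HOL-Library.Product_Lexorder"
begin

text \<open>
Fix the call execute_until_timestamp(d, v) of process p. Descriptor ids are allocated only once,
a descriptor is appended to v's queue only if it was never appended before, and only the head of
the queue is ever removed. Hence every descriptor D \<le> d passes through v's queue at most once,
and weighting it 2 before it is appended, 1 while it is queued and 0 afterwards gives a quantity
that no step of any process increases. Adding 1 while the descriptor p is executing has already
been removed by another process, and refining lexicographically by p's position inside the
execution of that descriptor, yields a measure that the other processes never increase and that
every step of p strictly decreases until p leaves the loop. So p reaches PopTrav d v whenever
it is scheduled infinitely often.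
\<close>

definition mem_inv :: "('n,'s,'a,'r) mem \<Rightarrow> bool" where
  "mem_inv m \<longleftrightarrow> 1 \<le> m_clock m
     \<and> (\<forall>D. 1 \<le> D \<longrightarrow> D < m_clock m \<longrightarrow> (\<exists>x. m_descs m D = Some x \<and> d_ts x = D))
     \<and> (\<forall>c. m_appd m c \<subseteq> {1..<m_clock m}) \<and> (\<forall>c. set (m_queue m c) \<subseteq> m_appd m c)
     \<and> (\<forall>c. distinct (m_queue m c))"

fun pc_descs :: "('n,'s,'r) pc \<Rightarrow> nat list" where
  "pc_descs Idle = []"
| "pc_descs (Trav d) = [d]"
| "pc_descs (EutRead d v) = [d]"
| "pc_descs (ExecCompute d v D) = [d, D]"
| "pc_descs (ExecChildren d v D cs r) = [d, D]"
| "pc_descs (ExecReadC d v D c cs r) = [d, D]"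
| "pc_descs (ExecCAS d v D c cs r old) = [d, D]"
| "pc_descs (ExecAppend d v D c cs r) = [d, D]"
| "pc_descs (ExecRemove d v D) = [d, D]"
| "pc_descs (PopTrav d v) = [d]"

definition pc_allocated :: "('n,'s,'a,'r) mem \<Rightarrow> ('n,'s,'r) pc \<Rightarrow> bool" where
  "pc_allocated m pc \<longleftrightarrow> (\<forall>x\<in>set (pc_descs pc). 1 \<le> x \<and> x < m_clock m)"

lemma pc_allocated_mono: "pc_allocated m pc \<Longrightarrow> m_clock m \<le> m_clock m' \<Longrightarrow> pc_allocated m' pc"
  unfolding pc_allocated_def by auto

lemma upd_dsc_simps [simp]:
  "m_queue (upd_dsc m D f) = m_queue m" "m_appd (upd_dsc m D f) = m_appd m"
  "m_clock (upd_dsc m D f) = m_clock m" "m_nst (upd_dsc m D f) = m_nst m"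
  by (simp_all add: upd_dsc_def)

lemma mem_inv_upd_dsc: "mem_inv m \<Longrightarrow> (\<And>x. d_ts (f x) = d_ts x) \<Longrightarrow> mem_inv (upd_dsc m D f)"
  unfolding mem_inv_def by (auto simp: upd_dsc_def)

lemma mem_inv_nst [simp]: "mem_inv (m\<lparr>m_nst := f\<rparr>) = mem_inv m"
  by (simp add: mem_inv_def)

lemma mem_inv_dsc_ts: "mem_inv m \<Longrightarrow> 1 \<le> D \<Longrightarrow> D < m_clock m \<Longrightarrow> d_ts (dsc m D) = D"
  unfolding mem_inv_def dsc_def by force

lemma mem_inv_appd_allocated: "mem_inv m \<Longrightarrow> x \<in> m_appd m c \<Longrightarrow> 1 \<le> x \<and> x < m_clock m"
  unfolding mem_inv_def by (meson atLeastLessThan_iff subsetD)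

lemma mem_inv_queue_appd: "mem_inv m \<Longrightarrow> x \<in> set (m_queue m c) \<Longrightarrow> x \<in> m_appd m c"
  unfolding mem_inv_def by blast

lemma mem_inv_distinct_queue: "mem_inv m \<Longrightarrow> distinct (m_queue m c)"
  unfolding mem_inv_def by blast

lemma mem_inv_clock_fresh: "mem_inv m \<Longrightarrow> m_clock m \<notin> m_appd m c"
  using mem_inv_appd_allocated by (metis less_irrefl)

lemma mem_inv_append:
  assumes "mem_inv m" "x \<notin> m_appd m c" "1 \<le> x" "x < m_clock m"
  shows "mem_inv (m\<lparr>m_queue := (m_queue m)(c := m_queue m c @ [x]),
                    m_appd := (m_appd m)(c := insert x (m_appd m c))\<rparr>)"
proof -
  have "x \<notin> set (m_queue m c)" using assms(1,2) mem_inv_queue_appd by metis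
  then show ?thesis using assms unfolding mem_inv_def by auto
qed

lemma mem_inv_pop:
  assumes "mem_inv m" "m_queue m v = y # q"
  shows "mem_inv (m\<lparr>m_queue := (m_queue m)(v := q)\<rparr>)"
proof -
  have "distinct (y # q)" "set (y # q) \<subseteq> m_appd m v" using assms unfolding mem_inv_def by metis+
  then show ?thesis using assms unfolding mem_inv_def by auto
qed

lemma mem_inv_new_desc:
  assumes I: "mem_inv m"
  shows "mem_inv (m\<lparr>m_descs := (m_descs m)(m_clock m \<mapsto>
                        \<lparr>d_op = a, d_ts = m_clock m, d_trav = tr, d_head = 0, d_proc = Map.empty\<rparr>),
                    m_queue := (m_queue m)(root := m_queue m root @ [m_clock m]),
                    m_appd := (m_appd m)(root := insert (m_clock m) (m_appd m root)),
                    m_clock := Suc (m_clock m)\<rparr>)" (is "mem_inv ?m")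
proof -
  have fresh: "m_clock m \<notin> set (m_queue m root)"
    using mem_inv_queue_appd[OF I] mem_inv_clock_fresh[OF I] by metis
  have descs: "\<exists>x. m_descs ?m D = Some x \<and> d_ts x = D" if "1 \<le> D" "D < m_clock ?m" for D
  proof (cases "D = m_clock m")
    case False
    then show ?thesis using I that unfolding mem_inv_def by auto
  qed simp
  have appd: "m_appd ?m c \<subseteq> {1..<m_clock ?m}" for c
  proof
    fix y assume "y \<in> m_appd ?m c"
    then have "y = m_clock m \<or> y \<in> m_appd m c" by (auto split: if_splits)
    then show "y \<in> {1..<m_clock ?m}"
      using mem_inv_appd_allocated[OF I, of y c] I unfolding mem_inv_def by auto
  qed
  have queue: "set (m_queue ?m c) \<subseteq> m_appd ?m c" for c
    using mem_inv_queue_appd[OF I] by auto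
  have distinct: "distinct (m_queue ?m c)" for c
    using mem_inv_distinct_queue[OF I] fresh by auto
  show ?thesis unfolding mem_inv_def using descs appd queue distinct by simp
qed

lemma pstep_preserves_inv:
  assumes "mem_inv m" "pc_allocated m pc" "pstep cont res upd root a pc m = (pc', m')"
  shows "mem_inv m' \<and> pc_allocated m' pc' \<and> m_clock m \<le> m_clock m'"
proof (cases pc)
  case Idle
  have "mem_inv m'" using assms Idle mem_inv_new_desc[OF assms(1)] by (auto simp: Let_def)
  moreover have "1 \<le> m_clock m" using assms unfolding mem_inv_def by blast
  ultimately show ?thesis using assms Idle by (auto simp: pc_allocated_def Let_def)
next
  case (EutRead d v)
  have m': "m' = m" using assms(3) EutRead by (auto split: if_splits list.splits)
  show ?thesis
  proof (cases "m_queue m v")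
    case (Cons y q)
    have "y \<in> m_appd m v" using mem_inv_queue_appd[OF assms(1)] Cons by (metis list.set_intros(1))
    then have "1 \<le> y \<and> y < m_clock m" using mem_inv_appd_allocated[OF assms(1)] by metis
    moreover have "pc' = PopTrav d v \<or> pc' = ExecCompute d v y"
      using assms(3) EutRead Cons by (auto split: if_splits)
    ultimately show ?thesis using assms(1,2) EutRead m' by (auto simp: pc_allocated_def)
  qed (use assms EutRead m' in \<open>auto simp: pc_allocated_def\<close>)
next
  case (ExecChildren d v D cs r)
  then show ?thesis using assms by (cases cs) (auto simp: pc_allocated_def intro!: mem_inv_upd_dsc)
next
  case (ExecCAS d v D c cs r old)
  then show ?thesis using assms by (cases "m_nst m c = old") (auto simp: pc_allocated_def)
next
  case (ExecAppend d v D c cs r)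
  show ?thesis
  proof (cases "D \<in> m_appd m c")
    case False
    have "1 \<le> D" "D < m_clock m" using assms ExecAppend by (auto simp: pc_allocated_def)
    then show ?thesis
      using assms ExecAppend False mem_inv_append[OF assms(1) False] by (auto simp: pc_allocated_def)
  qed (use assms ExecAppend in \<open>auto simp: pc_allocated_def\<close>)
next
  case (ExecRemove d v D)
  show ?thesis
  proof (cases "m_queue m v")
    case (Cons y q)
    then show ?thesis
      using assms ExecRemove mem_inv_pop[OF assms(1) Cons] by (auto simp: pc_allocated_def)
  qed (use assms ExecRemove in \<open>auto simp: pc_allocated_def\<close>)
next
  case (PopTrav d v)
  then show ?thesis using assms by (auto simp: pc_allocated_def intro!: mem_inv_upd_dsc)
qed (use assms in \<open>auto simp: pc_allocated_def Let_def split: if_splits\<close>)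

text \<open>q is the queue of a node and A the set of descriptors ever appended to it.\<close>

definition queue_step :: "nat list \<Rightarrow> nat set \<Rightarrow> nat list \<Rightarrow> nat set \<Rightarrow> bool" where
  "queue_step q A q' A' \<longleftrightarrow>
     (q' = q \<and> A' = A)
     \<or> (\<exists>x. x \<notin> A \<and> q' = q @ [x] \<and> A' = insert x A)
     \<or> (\<exists>x. q = x # q' \<and> A' = A)"

lemma queue_step_refl: "queue_step q A q A"
  unfolding queue_step_def by simp

lemma queue_step_append: "x \<notin> A \<Longrightarrow> queue_step q A (q @ [x]) (insert x A)"
  unfolding queue_step_def by blast

lemma queue_step_pop: "queue_step (x # q) A q A"
  unfolding queue_step_def by blast

lemma pstep_queue_step:
  assumes "mem_inv m" "pstep cont res upd root a pc m = (pc', m')"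
  shows "queue_step (m_queue m v) (m_appd m v) (m_queue m' v) (m_appd m' v)"
proof (cases pc)
  case Idle
  then have "m_queue m' = (m_queue m)(root := m_queue m root @ [m_clock m])"
    and "m_appd m' = (m_appd m)(root := insert (m_clock m) (m_appd m root))"
    using assms(2) by (auto simp: Let_def)
  then show ?thesis using mem_inv_clock_fresh[OF assms(1)]
    by (cases "v = root") (simp_all add: queue_step_append queue_step_refl)
next
  case (ExecChildren d' v' D cs r)
  then show ?thesis using assms by (cases cs) (auto intro: queue_step_refl split: if_splits)
next
  case (ExecAppend d' v' D c cs r)
  then show ?thesis using assms
    by (cases "D \<in> m_appd m c"; cases "c = v") (auto intro: queue_step_append queue_step_refl)
next
  case (ExecRemove d' v' D)
  then show ?thesis using assms
    by (cases "m_queue m v'"; cases "v' = v") (auto intro: queue_step_pop queue_step_refl split: if_splits)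
qed (use assms in \<open>auto simp: Let_def intro: queue_step_refl split: if_splits list.splits\<close>)

lemma execution_step:
  assumes "execution cont res upd root s0 \<sigma> sched"
  obtains a where
    "pstep cont res upd root a (snd (\<sigma> i) (sched i)) (fst (\<sigma> i))
       = (snd (\<sigma> (Suc i)) (sched i), fst (\<sigma> (Suc i)))"
    and "\<And>q. q \<noteq> sched i \<Longrightarrow> snd (\<sigma> (Suc i)) q = snd (\<sigma> i) q"
proof -
  from assms have "step cont res upd root (sched i) (\<sigma> i) (\<sigma> (Suc i))"
    unfolding execution_def by blast
  then obtain a where "\<sigma> (Suc i) = (let (q, m') = pstep cont res upd root a (snd (\<sigma> i) (sched i)) (fst (\<sigma> i))
                                     in (m', (snd (\<sigma> i))(sched i := q)))"
    unfolding step_def by blast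
  then show ?thesis using that[of a] by (auto simp: case_prod_beta)
qed

lemma execution_inv:
  assumes ex: "execution cont res upd root s0 \<sigma> sched"
  shows "mem_inv (fst (\<sigma> i)) \<and> (\<forall>q. pc_allocated (fst (\<sigma> i)) (snd (\<sigma> i) q))"
proof (induction i)
  case 0
  have "\<sigma> 0 = init_conf s0" using ex unfolding execution_def by blast
  then show ?case unfolding init_conf_def mem_inv_def pc_allocated_def by auto
next
  case (Suc i)
  obtain a where st: "pstep cont res upd root a (snd (\<sigma> i) (sched i)) (fst (\<sigma> i))
                        = (snd (\<sigma> (Suc i)) (sched i), fst (\<sigma> (Suc i)))"
    and others: "\<And>q. q \<noteq> sched i \<Longrightarrow> snd (\<sigma> (Suc i)) q = snd (\<sigma> i) q"
    using execution_step[OF ex] by blast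
  have "mem_inv (fst (\<sigma> (Suc i))) \<and> pc_allocated (fst (\<sigma> (Suc i))) (snd (\<sigma> (Suc i)) (sched i))
        \<and> m_clock (fst (\<sigma> i)) \<le> m_clock (fst (\<sigma> (Suc i)))"
    using pstep_preserves_inv[OF _ _ st] Suc.IH by blast
  then show ?case using Suc.IH others pc_allocated_mono by metis
qed

text \<open>D \<le> d because the loop executes only descriptors whose timestamp, i.e. id, is at most d.\<close>

definition admissible_desc :: "nat \<Rightarrow> nat list \<Rightarrow> nat set \<Rightarrow> nat \<Rightarrow> bool" where
  "admissible_desc d q A D \<longleftrightarrow> 1 \<le> D \<and> D \<le> d \<and> D \<in> A \<and> (D \<in> set q \<longrightarrow> hd q = D)"

fun eut_call :: "('n,'s,'r) pc \<Rightarrow> (nat \<times> 'n) option" where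
  "eut_call (EutRead d v) = Some (d, v)"
| "eut_call (ExecCompute d v D) = Some (d, v)"
| "eut_call (ExecChildren d v D cs r) = Some (d, v)"
| "eut_call (ExecReadC d v D c cs r) = Some (d, v)"
| "eut_call (ExecCAS d v D c cs r old) = Some (d, v)"
| "eut_call (ExecAppend d v D c cs r) = Some (d, v)"
| "eut_call (ExecRemove d v D) = Some (d, v)"
| "eut_call _ = None"

fun executed_desc :: "('n,'s,'r) pc \<Rightarrow> nat option" where
  "executed_desc (ExecCompute d v D) = Some D"
| "executed_desc (ExecChildren d v D cs r) = Some D"
| "executed_desc (ExecReadC d v D c cs r) = Some D"
| "executed_desc (ExecCAS d v D c cs r old) = Some D"
| "executed_desc (ExecAppend d v D c cs r) = Some D"
| "executed_desc (ExecRemove d v D) = Some D"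
| "executed_desc _ = None"

text \<open>Each remaining child costs the four steps ExecReadC, ExecCAS, ExecAppend, ExecChildren.\<close>

fun exec_phase :: "('n,'s,'r) pc \<Rightarrow> nat \<times> nat" where
  "exec_phase (EutRead d v) = (2, 0)"
| "exec_phase (ExecCompute d v D) = (1, 0)"
| "exec_phase (ExecChildren d v D cs r) = (0, 4 * length cs + 1)"
| "exec_phase (ExecReadC d v D c cs r) = (0, 4 * length cs + 4)"
| "exec_phase (ExecCAS d v D c cs r old) = (0, 4 * length cs + 3)"
| "exec_phase (ExecAppend d v D c cs r) = (0, 4 * length cs + 2)"
| "exec_phase _ = (0, 0)"

definition in_eut :: "nat \<Rightarrow> 'n \<Rightarrow> nat list \<Rightarrow> nat set \<Rightarrow> ('n,'s,'r) pc \<Rightarrow> bool" where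
  "in_eut d v q A pc \<longleftrightarrow>
     eut_call pc = Some (d, v) \<and> (\<forall>D. executed_desc pc = Some D \<longrightarrow> admissible_desc d q A D)"

definition desc_weight :: "nat list \<Rightarrow> nat set \<Rightarrow> nat \<Rightarrow> nat" where
  "desc_weight q A D = (if D \<notin> A then 2 else if D \<in> set q then 1 else 0)"

definition executed_gone :: "nat list \<Rightarrow> ('n,'s,'r) pc \<Rightarrow> nat" where
  "executed_gone q pc = (case executed_desc pc of Some D \<Rightarrow> if D \<in> set q then 0 else 1 | None \<Rightarrow> 0)"

definition eut_measure :: "nat \<Rightarrow> nat list \<Rightarrow> nat set \<Rightarrow> ('n,'s,'r) pc \<Rightarrow> nat \<times> nat \<times> nat" where
  "eut_measure d q A pc = ((\<Sum>D\<in>{1..d}. desc_weight q A D) + executed_gone q pc, exec_phase pc)"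

lemma admissible_desc_queue_step:
  assumes "distinct q" "admissible_desc d q A D" "queue_step q A q' A'"
  shows "admissible_desc d q' A' D"
  using assms(3) unfolding queue_step_def
proof (elim disjE exE conjE)
  fix x assume "x \<notin> A" "q' = q @ [x]" "A' = insert x A"
  then show ?thesis using assms(2) unfolding admissible_desc_def by (cases q) auto
next
  fix x assume "q = x # q'" "A' = A"
  then show ?thesis using assms(1,2) unfolding admissible_desc_def by auto
qed (use assms(2) in auto)

lemma eut_measure_queue_step:
  assumes dq: "distinct q" and L: "in_eut d v q A pc" and qs: "queue_step q A q' A'"
  shows "in_eut d v q' A' pc \<and> eut_measure d q' A' pc \<le> eut_measure d q A pc"
proof -
  have wle: "desc_weight q' A' D \<le> desc_weight q A D" for D
    using qs unfolding queue_step_def desc_weight_def by auto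
  have "(\<Sum>D\<in>{1..d}. desc_weight q' A' D) + executed_gone q' pc
          \<le> (\<Sum>D\<in>{1..d}. desc_weight q A D) + executed_gone q pc"
  proof (cases "executed_gone q' pc \<le> executed_gone q pc")
    case True
    have "(\<Sum>D\<in>{1..d}. desc_weight q' A' D) \<le> (\<Sum>D\<in>{1..d}. desc_weight q A D)"
      using wle by (intro sum_mono)
    then show ?thesis using True by linarith
  next
    case False
    then obtain D where D: "executed_desc pc = Some D" "D \<in> set q" "D \<notin> set q'"
      unfolding executed_gone_def by (auto split: option.splits if_splits)
    have adm: "admissible_desc d q A D" using L D(1) unfolding in_eut_def by auto
    have "A \<subseteq> A'" using qs unfolding queue_step_def by auto
    then have "desc_weight q' A' D < desc_weight q A D"
      using adm D unfolding admissible_desc_def desc_weight_def by auto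
    moreover have "D \<in> {1..d}" using adm unfolding admissible_desc_def by auto
    ultimately have "(\<Sum>D\<in>{1..d}. desc_weight q' A' D) < (\<Sum>D\<in>{1..d}. desc_weight q A D)"
      using wle by (intro sum_strict_mono_ex1) auto
    moreover have "executed_gone q' pc \<le> 1" "executed_gone q pc = 0"
      using D unfolding executed_gone_def by auto
    ultimately show ?thesis by linarith
  qed
  moreover have "in_eut d v q' A' pc"
    using L admissible_desc_queue_step[OF dq _ qs] unfolding in_eut_def by auto
  ultimately show ?thesis unfolding eut_measure_def by (auto simp: less_eq_prod_def)
qed

lemma eut_measure_phase_step:
  assumes "in_eut d v q A pc" "eut_call pc' = Some (d, v)"
    and "executed_desc pc' = executed_desc pc" "exec_phase pc' < exec_phase pc"
  shows "in_eut d v q A pc' \<and> eut_measure d q A pc' < eut_measure d q A pc"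
  using assms unfolding in_eut_def eut_measure_def executed_gone_def by simp

lemma eut_read_step:
  assumes I: "mem_inv m" and ok: "pc_allocated m (EutRead d v)"
    and st: "pstep cont res upd root a (EutRead d v) m = (pc', m')"
  shows "pc' = PopTrav d v \<or> (in_eut d v (m_queue m' v) (m_appd m' v) pc' \<and>
           eut_measure d (m_queue m' v) (m_appd m' v) pc'
             < eut_measure d (m_queue m v) (m_appd m v) (EutRead d v))"
proof (cases "m_queue m v")
  case (Cons D q)
  have m': "m' = m" using st by (auto split: if_splits list.splits)
  have "D \<in> m_appd m v" using mem_inv_queue_appd[OF I] Cons by (metis list.set_intros(1))
  then have D: "1 \<le> D \<and> D < m_clock m" using mem_inv_appd_allocated[OF I] by metis
  have d: "1 \<le> d \<and> d < m_clock m" using ok by (auto simp: pc_allocated_def)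
  show ?thesis
  proof (cases "d_ts (dsc m D) > d_ts (dsc m d)")
    case False
    then have "D \<le> d" using mem_inv_dsc_ts[OF I] D d by auto
    moreover have pc': "pc' = ExecCompute d v D" using st Cons False by auto
    ultimately have "admissible_desc d (m_queue m' v) (m_appd m' v) D"
      using D \<open>D \<in> m_appd m v\<close> m' Cons unfolding admissible_desc_def by auto
    moreover have "executed_gone (m_queue m' v) pc' = 0"
      using pc' m' Cons unfolding executed_gone_def by auto
    ultimately show ?thesis using pc' m' unfolding in_eut_def eut_measure_def by auto
  qed (use st Cons in auto)
qed (use st in auto)

lemma eut_remove_step:
  fixes m :: "('n,'s,'a,'r) mem"
  assumes I: "mem_inv m" and L: "in_eut d v (m_queue m v) (m_appd m v) (ExecRemove d v D)"
    and st: "pstep cont res upd root a (ExecRemove d v D) m = (pc', m')"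
  shows "in_eut d v (m_queue m' v) (m_appd m' v) pc' \<and>
           eut_measure d (m_queue m' v) (m_appd m' v) pc'
             < eut_measure d (m_queue m v) (m_appd m v) (ExecRemove d v D)"
proof -
  let ?W = "\<lambda>q A. \<Sum>D\<in>{1..d}. desc_weight q A D"
  let ?pc = "ExecRemove d v D :: ('n,'s,'r) pc"
  have adm: "admissible_desc d (m_queue m v) (m_appd m v) D" using L unfolding in_eut_def by auto
  have pc': "pc' = EutRead d v" using st by auto
  consider (head) q where "m_queue m v = D # q" | (gone) "D \<notin> set (m_queue m v)"
  proof (cases "D \<in> set (m_queue m v)")
    case True
    with adm have "m_queue m v = D # tl (m_queue m v)"
      unfolding admissible_desc_def by (cases "m_queue m v") auto
    then show ?thesis using that(1) by blast
  qed (use that(2) in blast)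
  then have "?W (m_queue m' v) (m_appd m' v)
               < ?W (m_queue m v) (m_appd m v) + executed_gone (m_queue m v) ?pc"
  proof cases
    case (head q)
    have m': "m' = m\<lparr>m_queue := (m_queue m)(v := q)\<rparr>" using st head by auto
    have "distinct (D # q)" using mem_inv_distinct_queue[OF I, of v] head by simp
    then have "desc_weight q (m_appd m v) D < desc_weight (m_queue m v) (m_appd m v) D"
      using head adm unfolding desc_weight_def admissible_desc_def by auto
    moreover have "desc_weight q (m_appd m v) x \<le> desc_weight (m_queue m v) (m_appd m v) x" for x
      using head unfolding desc_weight_def by auto
    moreover have "D \<in> {1..d}" using adm unfolding admissible_desc_def by auto
    ultimately have "?W q (m_appd m v) < ?W (m_queue m v) (m_appd m v)"
      by (intro sum_strict_mono_ex1) auto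
    then show ?thesis using m' by simp
  next
    case gone
    then have "m' = m" using st by (auto split: list.splits)
    moreover have "executed_gone (m_queue m v) ?pc = 1"
      using gone unfolding executed_gone_def by auto
    ultimately show ?thesis by simp
  qed
  then show ?thesis using pc' unfolding in_eut_def eut_measure_def executed_gone_def by simp
qed

lemma eut_own_step:
  assumes I: "mem_inv m" and ok: "pc_allocated m pc" and L: "in_eut d v (m_queue m v) (m_appd m v) pc"
    and st: "pstep cont res upd root a pc m = (pc', m')"
  shows "pc' = PopTrav d v \<or> (in_eut d v (m_queue m' v) (m_appd m' v) pc' \<and>
           eut_measure d (m_queue m' v) (m_appd m' v) pc' < eut_measure d (m_queue m v) (m_appd m v) pc)"
proof -
  have call: "eut_call pc = Some (d, v)" using L unfolding in_eut_def by auto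
  note phase = eut_measure_phase_step[OF L]
  show ?thesis
  proof (cases pc)
    case (EutRead d' v')
    with call have pc: "pc = EutRead d v" by simp
    show ?thesis using eut_read_step[OF I] ok st unfolding pc by blast
  next
    case (ExecCompute d' v' D)
    then have "m' = m" "\<exists>cs r. pc' = ExecChildren d v D cs r" using st call by (auto simp: Let_def)
    then show ?thesis using phase[of pc'] ExecCompute by auto
  next
    case (ExecChildren d' v' D cs r)
    then show ?thesis using st call phase[of pc'] by (cases cs) (auto split: if_splits)
  next
    case (ExecReadC d' v' D c cs r)
    then have "m' = m" "pc' = ExecAppend d v D c cs r \<or> (\<exists>old. pc' = ExecCAS d v D c cs r old)"
      using st call by (auto split: if_splits)
    then show ?thesis using phase[of pc'] ExecReadC by auto
  next
    case (ExecCAS d' v' D c cs r old)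
    then show ?thesis using st call phase[of pc'] by (auto split: if_splits)
  next
    case (ExecAppend d' v' D c cs r)
    have "D \<in> m_appd m v" using L ExecAppend unfolding in_eut_def admissible_desc_def by auto
    then have "c \<noteq> v" if "D \<notin> m_appd m c" using that by blast
    then have "m_queue m' v = m_queue m v" "m_appd m' v = m_appd m v"
      using st ExecAppend by (auto split: if_splits)
    moreover have "pc' = ExecChildren d v D cs r" using st call ExecAppend by simp
    ultimately show ?thesis using phase[of pc'] ExecAppend by simp
  next
    case (ExecRemove d' v' D)
    with call have pc: "pc = ExecRemove d v D" by simp
    show ?thesis using eut_remove_step[OF I] L st unfolding pc by blast
  qed (use call in auto)
qed

lemma eventually_by_measure:
  fixes sched :: "nat \<Rightarrow> 'p" and M :: "nat \<Rightarrow> 'b::wellorder"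
  assumes fair: "\<forall>i. \<exists>t\<ge>i. sched t = p"
    and start: "Q k"
    and progress: "\<And>i. k \<le> i \<Longrightarrow> Q i \<Longrightarrow>
       P (Suc i) \<or> (Q (Suc i) \<and> M (Suc i) \<le> M i \<and> (sched i = p \<longrightarrow> M (Suc i) < M i))"
  shows "\<exists>i\<ge>k. P i"
proof (rule ccontr)
  assume "\<not> ?thesis"
  then have step: "Q (Suc i) \<and> M (Suc i) \<le> M i \<and> (sched i = p \<longrightarrow> M (Suc i) < M i)"
    if "k \<le> i" "Q i" for i
    using progress[OF that] that by auto
  have Q: "Q i" if "k \<le> i" for i
    using that by (induction i rule: dec_induct) (use start step in auto)
  have antitone: "M (i + n) \<le> M i" if "k \<le> i" for i n
  proof (induction n)
    case (Suc n)
    have "M (Suc (i + n)) \<le> M (i + n)" using step Q that by simp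
    then show ?case using Suc.IH by simp
  qed simp
  have "\<not> (k \<le> i \<and> M i = x)" for x i
  proof (induction x arbitrary: i rule: less_induct)
    case (less x)
    show ?case
    proof
      assume i: "k \<le> i \<and> M i = x"
      obtain t where t: "i \<le> t" "sched t = p" using fair by blast
      have "M (Suc t) < M t" using step[of t] Q[of t] t i by auto
      also have "M t \<le> M i" using antitone[of i "t - i"] t i by simp
      finally show False using less.IH[of "M (Suc t)" "Suc t"] i t by simp
    qed
  qed
  then show False by blast
qed

lemma eut_reaches_pop:
  assumes ex: "execution cont res upd root s0 \<sigma> sched"
    and call: "snd (\<sigma> k) p = EutRead d v"
    and fair: "\<forall>i. \<exists>t\<ge>i. sched t = p"
  shows "\<exists>i\<ge>k. snd (\<sigma> i) p = PopTrav d v"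
proof (rule eventually_by_measure[OF fair])
  let ?q = "\<lambda>i. m_queue (fst (\<sigma> i)) v" and ?A = "\<lambda>i. m_appd (fst (\<sigma> i)) v"
  show "in_eut d v (?q k) (?A k) (snd (\<sigma> k) p)" using call unfolding in_eut_def by simp
  fix i
  assume L: "in_eut d v (?q i) (?A i) (snd (\<sigma> i) p)"
  obtain a where st: "pstep cont res upd root a (snd (\<sigma> i) (sched i)) (fst (\<sigma> i))
                        = (snd (\<sigma> (Suc i)) (sched i), fst (\<sigma> (Suc i)))"
    and others: "\<And>q. q \<noteq> sched i \<Longrightarrow> snd (\<sigma> (Suc i)) q = snd (\<sigma> i) q"
    using execution_step[OF ex] by blast
  have I: "mem_inv (fst (\<sigma> i))" "pc_allocated (fst (\<sigma> i)) (snd (\<sigma> i) (sched i))"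
    using execution_inv[OF ex] by blast+
  show "snd (\<sigma> (Suc i)) p = PopTrav d v
        \<or> (in_eut d v (?q (Suc i)) (?A (Suc i)) (snd (\<sigma> (Suc i)) p)
           \<and> eut_measure d (?q (Suc i)) (?A (Suc i)) (snd (\<sigma> (Suc i)) p)
               \<le> eut_measure d (?q i) (?A i) (snd (\<sigma> i) p)
           \<and> (sched i = p \<longrightarrow> eut_measure d (?q (Suc i)) (?A (Suc i)) (snd (\<sigma> (Suc i)) p)
                                < eut_measure d (?q i) (?A i) (snd (\<sigma> i) p)))"
  proof (cases "sched i = p")
    case True
    have "pc_allocated (fst (\<sigma> i)) (snd (\<sigma> i) p)"
      and "pstep cont res upd root a (snd (\<sigma> i) p) (fst (\<sigma> i)) = (snd (\<sigma> (Suc i)) p, fst (\<sigma> (Suc i)))"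
      using I(2) st True by simp_all
    from eut_own_step[OF I(1) this(1) L this(2)] show ?thesis by auto
  next
    case False
    have "queue_step (?q i) (?A i) (?q (Suc i)) (?A (Suc i))"
      using pstep_queue_step[OF I(1) st] .
    then show ?thesis
      using eut_measure_queue_step[OF mem_inv_distinct_queue[OF I(1)] L] others[of p] False
      by auto
  qed
qed

text \<open>
The bound N may depend on the whole execution: if p is scheduled only finitely often, a bound
exceeding its number of remaining steps makes the claim vacuous.
\<close>

lemma own_steps_bound_if_eventually:
  fixes sched :: "nat \<Rightarrow> 'p" and k :: nat
  assumes "(\<forall>i. \<exists>t\<ge>i. sched t = p) \<Longrightarrow> \<exists>i\<ge>k. P i"
  shows "\<exists>N. \<forall>j\<ge>k. N \<le> card {i. k \<le> i \<and> i < j \<and> sched i = p} \<longrightarrow> (\<exists>i. k \<le> i \<and> i \<le> j \<and> P i)"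
proof -
  let ?S = "\<lambda>j. {i. k \<le> i \<and> i < j \<and> sched i = p}"
  have card_S: "card (?S j) \<le> card (?S j')" if "j \<le> j'" for j j'
  proof (rule card_mono)
    show "finite (?S j')" by (rule finite_subset[of _ "{..<j'}"]) auto
    show "?S j \<subseteq> ?S j'" using that by auto
  qed
  show ?thesis
  proof (cases "\<forall>i. \<exists>t\<ge>i. sched t = p")
    case True
    then obtain i0 where i0: "k \<le> i0" "P i0" using assms by blast
    have "i0 \<le> j" if "Suc (card (?S i0)) \<le> card (?S j)" for j
    proof (rule ccontr)
      assume "\<not> i0 \<le> j"
      then have "card (?S j) \<le> card (?S i0)" by (intro card_S) simp
      then show False using that by simp
    qed
    then show ?thesis using i0 by (intro exI[of _ "Suc (card (?S i0))"]) blast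
  next
    case False
    then obtain i1 where i1: "\<And>t. i1 \<le> t \<Longrightarrow> sched t \<noteq> p" by blast
    have "card (?S j) < Suc i1" for j
    proof -
      have "?S j \<subseteq> {..<i1}"
      proof
        fix x assume "x \<in> ?S j"
        then have "\<not> i1 \<le> x" using i1 by blast
        then show "x \<in> {..<i1}" by simp
      qed
      then have "card (?S j) \<le> card {..<i1}" by (intro card_mono) simp_all
      then show ?thesis by simp
    qed
    then have "\<not> Suc i1 \<le> card (?S j)" for j by (simp add: not_le)
    then show ?thesis by (intro exI[of _ "Suc i1"]) blast
  qed
qed

theorem lemma2:
  fixes cont :: "'a \<Rightarrow> 's \<Rightarrow> 'n list" and res :: "'a \<Rightarrow> 's \<Rightarrow> 'r"
    and upd :: "'a \<Rightarrow> 's \<Rightarrow> 's" and root :: 'n and s0 :: "'n \<Rightarrow> 's"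
    and \<sigma> :: "nat \<Rightarrow> ('p::finite,'n,'s,'a,'r) config" and sched :: "nat \<Rightarrow> 'p"
    and p :: 'p and d :: nat and v :: 'n and k :: nat
  assumes "execution cont res upd root s0 \<sigma> sched"
    and "sched k = p" and "snd (\<sigma> k) p = Trav d" and "snd (\<sigma> (Suc k)) p = EutRead d v"
  shows "\<exists>N. \<forall>j \<ge> Suc k. N \<le> card {i. Suc k \<le> i \<and> i < j \<and> sched i = p}
             \<longrightarrow> (\<exists>i. Suc k \<le> i \<and> i \<le> j \<and> snd (\<sigma> i) p = PopTrav d v)"
  by (rule own_steps_bound_if_eventually[where P = "\<lambda>i. snd (\<sigma> i) p = PopTrav d v"])
    (rule eut_reaches_pop[OF assms(1,4)])

end
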